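(* Let $h, j_2\in\mathbb{R}$ with $j_2\neq 0$, and suppose the cubic $P(z)=-2z^3+2z^2+2hz-\frac{j_2^2}{2}$ has three distinct real roots $z_1<z_2<z_3$ (then $z_1<0<z_2<z_3$). Define $$I_1(h,j_2)=\frac{\sqrt2}{2\pi}\int_{z_2}^{z_3}\frac{\sqrt{P(z)}}{z}\,dz .$$ Then $$2\pi I_1(h,j_2)=g_1K(\kappa)+g_2E(\kappa)+g_3\Pi(n,\kappa),$$ where $$g_1=\frac{4(2h+z_1)}{3\sqrt{z_3-z_1}},\quad g_2=\frac{4\sqrt{z_3-z_1}}{3},\quad g_3=-\frac{j_2^2}{z_3\sqrt{z_3-z_1}},\qquad \kappa^2=\frac{z_3-z_2}{z_3-z_1},\quad n=\frac{z_3-z_2}{z_3}.$$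
   Context: Setting: the champagne bottle Hamiltonian $H=\frac12(y_1^2+y_2^2)-(x_1^2+x_2^2)+(x_1^2+x_2^2)^2$ in polar coordinates reads $H=\frac12(p_r^2+p_\varphi^2/r^2)+r^4-r^2$, with angular momentum $p_\varphi$. For energy $h$ and angular momentum value $\ell$, the quantities above are the rescaled ones: $j_2=\sqrt2\,\ell$ and $I_1=\sqrt2\cdot\frac{1}{2\pi}\oint p_r\,dr$ (the radial action, computed with $z=r^2$), which equals $\frac{\sqrt2}{4\pi}\oint_\beta \frac{w}{z}dz$ over the real oval $\beta$ of $w^2=P(z)$ encircling $[z_2,z_3]$. $K(\kappa)=\int_0^{\pi/2}\frac{dt}{\sqrt{1-\kappa^2\sin^2t}}$, $E(\kappa)=\int_0^{\pi/2}\sqrt{1-\kappa^2\sin^2 t}\,dt$, $\Pi(n,\kappa)=\int_0^{\pi/2}\frac{dt}{(1-n\sin^2t)\sqrt{1-\kappa^2\sin^2t}}$ are the complete elliptic integrals of the first, second and third kind in Legendre form. *)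

theory Defs
  imports "HOL-Analysis.Analysis"
begin

definition ellK :: "real \<Rightarrow> real" where
  "ellK \<kappa> = integral {0..pi/2} (\<lambda>t. 1 / sqrt (1 - \<kappa>\<^sup>2 * (sin t)\<^sup>2))"

definition ellE :: "real \<Rightarrow> real" where
  "ellE \<kappa> = integral {0..pi/2} (\<lambda>t. sqrt (1 - \<kappa>\<^sup>2 * (sin t)\<^sup>2))"

definition ellPi :: "real \<Rightarrow> real \<Rightarrow> real" where
  "ellPi n \<kappa> = integral {0..pi/2}
     (\<lambda>t. 1 / ((1 - n * (sin t)\<^sup>2) * sqrt (1 - \<kappa>\<^sup>2 * (sin t)\<^sup>2)))"

definition Pcub :: "real \<Rightarrow> real \<Rightarrow> real \<Rightarrow> real" where
  "Pcub h j2 z = -2 * z^3 + 2 * z^2 + 2 * h * z - j2\<^sup>2 / 2"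

definition I1 :: "real \<Rightarrow> real \<Rightarrow> real \<Rightarrow> real \<Rightarrow> real" where
  "I1 h j2 z2 z3 = sqrt 2 / (2 * pi) * integral {z2..z3} (\<lambda>z. sqrt (Pcub h j2 z) / z)"

end

theory Submission
  imports Defs
begin

(* Since P(z) = 2 (z - z1) (z - z2) (z3 - z), the substitution z = z3 - (z3 - z2) sin^2 t,
   which maps [0, pi/2] onto [z2, z3], gives
   sqrt P(z) = sqrt (2 (z3 - z1)) (z3 - z2) sin t cos t Delta(t),  Delta(t) = sqrt (1 - kappa^2 sin^2 t).
   With u = sin^2 t the integrand becomes sqrt (z3 - z1) / Delta(t) times a rational function of u
   with a single pole at u = 1/n.  Its partial fraction decomposition consists of a constant, a
   multiple of Delta(t)^2, a multiple of 1/(1 - n u) and a quadratic remainder.  The first three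
   give K, E and Pi; the remainder divided by Delta(t) is the derivative of sin t cos t Delta(t),
   which vanishes at both end points. *)

lemma Pcub_roots_Vieta:
  fixes h j2 z1 z2 z3 :: real
  assumes "z1 < z2" "z2 < z3"
    and "Pcub h j2 z1 = 0" "Pcub h j2 z2 = 0" "Pcub h j2 z3 = 0"
  shows "z1 + z2 + z3 = 1" "h = - (z1 * z2 + z1 * z3 + z2 * z3)" "j2\<^sup>2 = - 4 * z1 * z2 * z3"
proof -
  have diff: "Pcub h j2 y - Pcub h j2 x = 2 * (y - x) * (h + x + y - (x\<^sup>2 + x * y + y\<^sup>2))"
    for x y
    unfolding Pcub_def by (simp add: algebra_simps power2_eq_square power3_eq_cube)
  have q12: "h + z1 + z2 - (z1\<^sup>2 + z1 * z2 + z2\<^sup>2) = 0"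
    using diff[of z2 z1] assms by simp
  have q13: "h + z1 + z3 - (z1\<^sup>2 + z1 * z3 + z3\<^sup>2) = 0"
    using diff[of z3 z1] assms by simp
  have "(z3 - z2) * (z1 + z2 + z3 - 1) = 0"
    using q12 q13 by (simp add: algebra_simps power2_eq_square)
  then show "z1 + z2 + z3 = 1"
    using assms by simp
  then have z3: "z3 = 1 - z1 - z2"
    by simp
  show h: "h = - (z1 * z2 + z1 * z3 + z2 * z3)"
    using q12 unfolding z3 by (simp add: algebra_simps power2_eq_square)
  show "j2\<^sup>2 = - 4 * z1 * z2 * z3"
    using assms(3) unfolding Pcub_def h z3
    by (simp add: algebra_simps power2_eq_square power3_eq_cube)
qed

lemma Pcub_eq_root_product:
  fixes h j2 z1 z2 z3 :: real
  assumes "z1 < z2" "z2 < z3"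
    and "Pcub h j2 z1 = 0" "Pcub h j2 z2 = 0" "Pcub h j2 z3 = 0"
  shows "Pcub h j2 z = 2 * (z - z1) * (z - z2) * (z3 - z)"
proof -
  note Vieta = Pcub_roots_Vieta[OF assms]
  then have z3: "z3 = 1 - z1 - z2"
    by simp
  show ?thesis
    unfolding Pcub_def Vieta(2,3) unfolding z3
    by (simp add: field_simps power2_eq_square power3_eq_cube)
qed

lemma Pcub_roots_signs:
  fixes h j2 z1 z2 z3 :: real
  assumes "j2 \<noteq> 0" and "z1 < z2" "z2 < z3"
    and "Pcub h j2 z1 = 0" "Pcub h j2 z2 = 0" "Pcub h j2 z3 = 0"
  shows "z1 < 0" "0 < z2"
proof -
  note Vieta = Pcub_roots_Vieta[OF assms(2-)]
  have "0 < j2\<^sup>2"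
    using assms(1) by simp
  then have prod_neg: "z1 * (z2 * z3) < 0"
    using Vieta(3) by (simp add: mult.assoc)
  show z1: "z1 < 0"
  proof (rule ccontr)
    assume "\<not> z1 < 0"
    then have "0 \<le> z1 * (z2 * z3)"
      using assms(2,3) by simp
    with prod_neg show False
      by simp
  qed
  have "0 < z2 * z3"
    using prod_neg z1 by (simp add: mult_less_0_iff)
  moreover have "0 < z3"
    using Vieta(1) z1 assms(3) by simp
  ultimately show "0 < z2"
    by (simp add: zero_less_mult_iff)
qed

lemma Pcub_partial_fractions:
  fixes h j2 z1 z2 z3 u :: real
  defines "a \<equiv> z3 - z2" and "b \<equiv> z3 - z1"
  assumes "z1 + z2 + z3 = 1" "h = - (z1 * z2 + z1 * z3 + z2 * z3)" "j2\<^sup>2 = - 4 * z1 * z2 * z3"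
    and "b \<noteq> 0" "z3 - a * u \<noteq> 0"
  shows "4 * a\<^sup>2 * u * (1 - u) * (1 - a / b * u) / (z3 - a * u)
       = 4 * (2 * h + z1) / (3 * b) + 4 / 3 * (1 - a / b * u) - j2\<^sup>2 / (b * (z3 - a * u))
         - 4 * a / 3 * (1 - (2 + 2 * (a / b)) * u + 3 * (a / b) * u\<^sup>2)"
proof -
  have z3: "z3 = 1 - z1 - z2"
    using assms(3) by simp
  have numerators: "3 * (4 * a\<^sup>2 * u * (1 - u) * (b - a * u))
      = 4 * (2 * h + z1) * (z3 - a * u) + 4 * (b - a * u) * (z3 - a * u) - 3 * j2\<^sup>2
        - 4 * a * (b - (2 * b + 2 * a) * u + 3 * a * u\<^sup>2) * (z3 - a * u)"
    unfolding assms(4,5) a_def b_def z3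
    by (simp add: algebra_simps power2_eq_square power3_eq_cube)
  have "4 * a\<^sup>2 * u * (1 - u) * (1 - a / b * u) / (z3 - a * u)
      = 3 * (4 * a\<^sup>2 * u * (1 - u) * (b - a * u)) / (3 * b * (z3 - a * u))"
    using assms(6,7) by (simp add: field_simps)
  moreover have "4 * (2 * h + z1) / (3 * b) + 4 / 3 * (1 - a / b * u) - j2\<^sup>2 / (b * (z3 - a * u))
         - 4 * a / 3 * (1 - (2 + 2 * (a / b)) * u + 3 * (a / b) * u\<^sup>2)
      = (4 * (2 * h + z1) * (z3 - a * u) + 4 * (b - a * u) * (z3 - a * u) - 3 * j2\<^sup>2
         - 4 * a * (b - (2 * b + 2 * a) * u + 3 * a * u\<^sup>2) * (z3 - a * u)) / (3 * b * (z3 - a * u))"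
    using assms(6,7) by (simp add: field_simps)
  ultimately show ?thesis
    unfolding numerators by simp
qed

lemma sin_square_le_one: "(sin t)\<^sup>2 \<le> (1::real)"
  using abs_square_le_1 abs_sin_le_one by blast

lemma one_minus_mult_sin_square_pos:
  fixes k t :: real
  assumes "k < 1"
  shows "0 < 1 - k * (sin t)\<^sup>2"
proof (cases "k \<le> 0")
  case True
  then have "k * (sin t)\<^sup>2 \<le> 0"
    by (simp add: mult_nonpos_nonneg)
  then show ?thesis
    by simp
next
  case False
  then have "k * (sin t)\<^sup>2 \<le> k"
    using mult_left_le[OF sin_square_le_one, of k] by simp
  with assms show ?thesis
    by simp
qed

lemma ellK_has_integral:
  assumes "\<bar>\<kappa>\<bar> < 1"
  shows "((\<lambda>t. 1 / sqrt (1 - \<kappa>\<^sup>2 * (sin t)\<^sup>2)) has_integral ellK \<kappa>) {0..pi/2}"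
proof -
  have "\<kappa>\<^sup>2 < 1"
    using assms by (simp add: abs_square_less_1)
  then have "1 - \<kappa>\<^sup>2 * (sin t)\<^sup>2 \<noteq> 0" for t
    using one_minus_mult_sin_square_pos[of "\<kappa>\<^sup>2" t] by simp
  then show ?thesis
    unfolding ellK_def
    by (intro integrable_integral integrable_continuous_interval continuous_intros) auto
qed

lemma ellE_has_integral:
  "((\<lambda>t. sqrt (1 - \<kappa>\<^sup>2 * (sin t)\<^sup>2)) has_integral ellE \<kappa>) {0..pi/2}"
  unfolding ellE_def
  by (intro integrable_integral integrable_continuous_interval continuous_intros)

lemma ellPi_has_integral:
  assumes "\<bar>\<kappa>\<bar> < 1" and "n < 1"
  shows "((\<lambda>t. 1 / ((1 - n * (sin t)\<^sup>2) * sqrt (1 - \<kappa>\<^sup>2 * (sin t)\<^sup>2)))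
           has_integral ellPi n \<kappa>) {0..pi/2}"
proof -
  have "\<kappa>\<^sup>2 < 1"
    using assms by (simp add: abs_square_less_1)
  then have "1 - \<kappa>\<^sup>2 * (sin t)\<^sup>2 \<noteq> 0" "1 - n * (sin t)\<^sup>2 \<noteq> 0" for t
    using one_minus_mult_sin_square_pos[of "\<kappa>\<^sup>2" t] one_minus_mult_sin_square_pos[of n t] assms(2)
    by simp_all
  then show ?thesis
    unfolding ellPi_def
    by (intro integrable_integral integrable_continuous_interval continuous_intros) auto
qed

lemma has_real_derivative_sin_cos_sqrt:
  fixes k x :: real
  assumes "0 < 1 - k * (sin x)\<^sup>2"
  shows "((\<lambda>t. sin t * cos t * sqrt (1 - k * (sin t)\<^sup>2)) has_real_derivative
           (1 - (2 + 2 * k) * (sin x)\<^sup>2 + 3 * k * ((sin x)\<^sup>2)\<^sup>2)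
             / sqrt (1 - k * (sin x)\<^sup>2)) (at x)"
proof -
  define \<Delta> where "\<Delta> = sqrt (1 - k * (sin x)\<^sup>2)"
  have \<Delta>_pos: "0 < \<Delta>" and \<Delta>_square: "\<Delta> * \<Delta> = 1 - k * (sin x)\<^sup>2"
    unfolding \<Delta>_def using assms by (simp_all add: real_sqrt_mult_self)
  have "((\<lambda>t. sin t * cos t * sqrt (1 - k * (sin t)\<^sup>2)) has_real_derivative
          (cos x * cos x - sin x * sin x) * \<Delta> - sin x * cos x * (k * sin x * cos x) / \<Delta>) (at x)"
    unfolding \<Delta>_def using assms
    by (auto intro!: derivative_eq_intros simp: power2_eq_square field_simps)
  also have "(cos x * cos x - sin x * sin x) * \<Delta> - sin x * cos x * (k * sin x * cos x) / \<Delta>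
      = ((cos x * cos x - sin x * sin x) * (\<Delta> * \<Delta>) - k * (sin x)\<^sup>2 * (cos x * cos x)) / \<Delta>"
    using \<Delta>_pos by (simp add: field_simps power2_eq_square)
  also have "\<dots> = (1 - (2 + 2 * k) * (sin x)\<^sup>2 + 3 * k * ((sin x)\<^sup>2)\<^sup>2) / \<Delta>"
    unfolding \<Delta>_square cos_squared_eq[unfolded power2_eq_square]
    by (simp add: algebra_simps power2_eq_square)
  finally show ?thesis
    unfolding \<Delta>_def .
qed

lemma has_integral_sin_cos_sqrt_derivative:
  fixes k :: real
  assumes "k < 1"
  shows "((\<lambda>t. (1 - (2 + 2 * k) * (sin t)\<^sup>2 + 3 * k * ((sin t)\<^sup>2)\<^sup>2)
                / sqrt (1 - k * (sin t)\<^sup>2))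
           has_integral 0) {0..pi/2}"
  using fundamental_theorem_of_calculus[of 0 "pi/2" "\<lambda>t. sin t * cos t * sqrt (1 - k * (sin t)\<^sup>2)"]
    has_real_derivative_sin_cos_sqrt[OF one_minus_mult_sin_square_pos[OF assms]]
  by (simp add: has_real_derivative_iff_has_vector_derivative has_vector_derivative_at_within)

lemma has_integral_sin_square_substitution:
  fixes f :: "real \<Rightarrow> real" and a c :: real
  assumes "0 \<le> a" and "continuous_on {c - a..c} f"
  shows "((\<lambda>t. 2 * a * sin t * cos t * f (c - a * (sin t)\<^sup>2)) has_integral integral {c - a..c} f)
           {0..pi/2}"
proof -
  let ?g = "\<lambda>t. c - a * (sin t)\<^sup>2"
  have image: "?g ` {0..pi/2} \<subseteq> {c - a..c}"
    using assms(1) mult_left_le[OF sin_square_le_one assms(1)] by auto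
  have reversed: "integral {c..c - a} f = 0"
  proof (cases "a = 0")
    case False
    then have "{c..c - a} = {}"
      using assms(1) by simp
    then show ?thesis
      by simp
  qed simp
  have "((\<lambda>t. - (2 * a * sin t * cos t) *\<^sub>R f (?g t)) has_integral
               integral {?g 0..?g (pi/2)} f - integral {?g (pi/2)..?g 0} f) {0..pi/2}"
    by (rule has_integral_substitution_general[OF _ _ image assms(2), of "{}"])
       (auto intro!: continuous_intros derivative_eq_intros simp: power2_eq_square)
  then have "((\<lambda>t. - (2 * a * sin t * cos t * f (?g t))) has_integral
               - integral {c - a..c} f) {0..pi/2}"
    using reversed by simp
  from has_integral_neg[OF this] show ?thesis
    by simp
qed

lemma I1_integrand_Legendre_decomposition:
  fixes h j2 z1 z2 z3 t :: real
  defines "a \<equiv> z3 - z2" and "b \<equiv> z3 - z1"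
  assumes "z1 < z2" "0 < z2" "z2 < z3"
    and "Pcub h j2 z1 = 0" "Pcub h j2 z2 = 0" "Pcub h j2 z3 = 0"
    and "0 \<le> sin t" "0 \<le> cos t"
  shows "sqrt 2 * (2 * a * sin t * cos t *
           (sqrt (Pcub h j2 (z3 - a * (sin t)\<^sup>2)) / (z3 - a * (sin t)\<^sup>2)))
       = 4 * (2 * h + z1) / (3 * sqrt b) * (1 / sqrt (1 - a / b * (sin t)\<^sup>2))
         + 4 * sqrt b / 3 * sqrt (1 - a / b * (sin t)\<^sup>2)
         + - (j2\<^sup>2) / (z3 * sqrt b)
             * (1 / ((1 - a / z3 * (sin t)\<^sup>2) * sqrt (1 - a / b * (sin t)\<^sup>2)))
         + - (4 * a * sqrt b / 3)
             * ((1 - (2 + 2 * (a / b)) * (sin t)\<^sup>2 + 3 * (a / b) * ((sin t)\<^sup>2)\<^sup>2)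
                / sqrt (1 - a / b * (sin t)\<^sup>2))"
    (is "?lhs = ?rhs")
proof -
  define u where "u = (sin t)\<^sup>2"
  define D where "D = 1 - a / b * u"
  define S where "S = sqrt b"
  define \<Delta> where "\<Delta> = sqrt D"
  have a_pos: "0 < a" and a_less: "a < b" "a < z3"
    using assms(3-5) unfolding a_def b_def by auto
  have u: "0 \<le> u" "u \<le> 1" "(cos t)\<^sup>2 = 1 - u"
    unfolding u_def using sin_square_le_one by (simp_all add: cos_squared_eq)
  have D_pos: "0 < D"
    unfolding D_def u_def using a_less(1) a_pos
    by (intro one_minus_mult_sin_square_pos) simp
  have \<Delta>: "0 < \<Delta>" "\<Delta>\<^sup>2 = D"
    unfolding \<Delta>_def using D_pos by simp_all
  have z_pos: "0 < z3 - a * u"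
    using mult_left_le[OF u(2), of a] a_pos a_less(2) by linarith
  have S: "0 < S" "S\<^sup>2 = b"
    unfolding S_def using a_pos a_less(1) by simp_all
  have "Pcub h j2 (z3 - a * u) = 2 * a\<^sup>2 * u * (1 - u) * b * D"
    unfolding Pcub_eq_root_product[OF assms(3,5-8)] D_def
    using a_pos a_less(1) by (simp add: a_def b_def field_simps power2_eq_square)
  also have "\<dots> = (sqrt 2 * a * sin t * cos t * S * \<Delta>)\<^sup>2"
    unfolding u_def u(3)[symmetric] S(2)[symmetric] \<Delta>(2)[symmetric]
    by (simp add: power_mult_distrib cos_squared_eq)
  finally have sqrt_P: "sqrt (Pcub h j2 (z3 - a * u)) = sqrt 2 * a * sin t * cos t * S * \<Delta>"
    using assms(9,10) a_pos S(1) \<Delta>(1) by simp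
  have "?lhs = 4 * a\<^sup>2 * (sin t)\<^sup>2 * (cos t)\<^sup>2 * S * \<Delta> / (z3 - a * u)"
    unfolding sqrt_P[unfolded u_def] u_def by (simp add: power2_eq_square)
  also have "\<dots> = S * (4 * a\<^sup>2 * u * (1 - u) * D / (z3 - a * u)) / \<Delta>"
    using \<Delta>(1) z_pos unfolding u(3) u_def[symmetric] \<Delta>(2)[symmetric]
    by (simp add: field_simps power2_eq_square)
  also have "\<dots> = S * (4 * (2 * h + z1) / (3 * b) + 4 / 3 * D - j2\<^sup>2 / (b * (z3 - a * u))
         - 4 * a / 3 * (1 - (2 + 2 * (a / b)) * u + 3 * (a / b) * u\<^sup>2)) / \<Delta>"
    using Pcub_partial_fractions[of z1 z2 z3 h j2 u, folded a_def b_def,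
        OF Pcub_roots_Vieta[OF assms(3,5-8)]] a_less(1) a_pos z_pos
    unfolding D_def by simp
  also have "\<dots> = ?rhs"
    unfolding u_def[symmetric] D_def[symmetric] \<Delta>_def[symmetric] S_def[symmetric]
    unfolding \<Delta>(2)[symmetric] S(2)[symmetric]
    using \<Delta>(1) S(1) z_pos a_less(2) a_pos
    by (simp add: field_simps power2_eq_square)
  finally show ?thesis .
qed

lemma I1_integrand_has_integral_Legendre:
  fixes h j2 z1 z2 z3 :: real
  defines "a \<equiv> z3 - z2" and "b \<equiv> z3 - z1"
  assumes "z1 < z2" "0 < z2" "z2 < z3"
    and "Pcub h j2 z1 = 0" "Pcub h j2 z2 = 0" "Pcub h j2 z3 = 0"
  shows "((\<lambda>t. sqrt 2 * (2 * a * sin t * cos t *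
            (sqrt (Pcub h j2 (z3 - a * (sin t)\<^sup>2)) / (z3 - a * (sin t)\<^sup>2))))
          has_integral 4 * (2 * h + z1) / (3 * sqrt b) * ellK (sqrt (a / b))
            + 4 * sqrt b / 3 * ellE (sqrt (a / b))
            + - (j2\<^sup>2) / (z3 * sqrt b) * ellPi (a / z3) (sqrt (a / b))) {0..pi/2}"
proof -
  have "0 < a" "a < b" "a < z3"
    using assms(3-5) unfolding a_def b_def by simp_all
  then have \<kappa>: "\<bar>sqrt (a / b)\<bar> < 1" "(sqrt (a / b))\<^sup>2 = a / b" and n: "a / z3 < 1"
    by simp_all
  have "((\<lambda>t. 4 * (2 * h + z1) / (3 * sqrt b) * (1 / sqrt (1 - a / b * (sin t)\<^sup>2))
         + 4 * sqrt b / 3 * sqrt (1 - a / b * (sin t)\<^sup>2)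
         + - (j2\<^sup>2) / (z3 * sqrt b)
             * (1 / ((1 - a / z3 * (sin t)\<^sup>2) * sqrt (1 - a / b * (sin t)\<^sup>2)))
         + - (4 * a * sqrt b / 3)
             * ((1 - (2 + 2 * (a / b)) * (sin t)\<^sup>2 + 3 * (a / b) * ((sin t)\<^sup>2)\<^sup>2)
                / sqrt (1 - a / b * (sin t)\<^sup>2)))
      has_integral 4 * (2 * h + z1) / (3 * sqrt b) * ellK (sqrt (a / b))
         + 4 * sqrt b / 3 * ellE (sqrt (a / b))
         + - (j2\<^sup>2) / (z3 * sqrt b) * ellPi (a / z3) (sqrt (a / b))
         + - (4 * a * sqrt b / 3) * 0) {0..pi/2}"
    using ellK_has_integral[OF \<kappa>(1)] ellE_has_integral[of "sqrt (a / b)"]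
      ellPi_has_integral[OF \<kappa>(1) n] has_integral_sin_cos_sqrt_derivative[of "a / b"]
      \<open>0 < a\<close> \<open>a < b\<close>
    unfolding \<kappa>(2) by (intro has_integral_add has_integral_mult_right) simp_all
  then show ?thesis
    using I1_integrand_Legendre_decomposition[OF assms(3-8)]
    unfolding a_def b_def by (auto intro: has_integral_eq simp: sin_ge_zero cos_ge_zero)
qed

theorem lemma1:
  fixes h j2 z1 z2 z3 :: real
  assumes "j2 \<noteq> 0"
    and "z1 < z2" and "z2 < z3"
    and "Pcub h j2 z1 = 0" and "Pcub h j2 z2 = 0" and "Pcub h j2 z3 = 0"
  shows "2 * pi * I1 h j2 z2 z3 =
           (4 * (2 * h + z1) / (3 * sqrt (z3 - z1))) * ellK (sqrt ((z3 - z2) / (z3 - z1)))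
         + (4 * sqrt (z3 - z1) / 3) * ellE (sqrt ((z3 - z2) / (z3 - z1)))
         + (- (j2\<^sup>2) / (z3 * sqrt (z3 - z1))) * ellPi ((z3 - z2) / z3) (sqrt ((z3 - z2) / (z3 - z1)))"
proof -
  have z2_pos: "0 < z2"
    using Pcub_roots_signs[OF assms] by simp
  have "continuous_on {z3 - (z3 - z2)..z3} (\<lambda>z. sqrt (Pcub h j2 z) / z)"
    unfolding Pcub_def using z2_pos by (auto intro!: continuous_intros)
  from has_integral_mult_right[OF has_integral_sin_square_substitution[OF _ this], of "sqrt 2"]
  have "((\<lambda>t. sqrt 2 * (2 * (z3 - z2) * sin t * cos t *
           (sqrt (Pcub h j2 (z3 - (z3 - z2) * (sin t)\<^sup>2)) / (z3 - (z3 - z2) * (sin t)\<^sup>2))))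
         has_integral 2 * pi * I1 h j2 z2 z3) {0..pi/2}"
    using assms(3) unfolding I1_def by simp
  with I1_integrand_has_integral_Legendre[OF assms(2) z2_pos assms(3-6)] show ?thesis
    using has_integral_unique by blast
qed

end
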